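(* Let $a^+$ denote multiplication by $x$ and $a=\frac{d}{dx}$ (so $[a,a^+]=1$), and let $W_{1,\infty}$ be the algebra of operators generated by $a^+$, $(a^+)^{-1}$ and $a$, graded by $\mathrm{weight}(a^+)=1$, $\mathrm{weight}((a^+)^{-1})=\mathrm{weight}(a)=-1$. Let $e\ge 0$ be an integer and let $$\Omega=\sum_{w}\alpha_w\, w$$ be a finite linear combination of words $w$ in the letters $a^+,(a^+)^{-1},a$, each containing exactly one occurrence of $a$ and each of weight $e$. Define the coefficients $S_\Omega(n,k)$ by the normal ordering $$\mathcal{N}(\Omega^n)=(a^+)^{ne}\sum_{k\ge 0}S_\Omega(n,k)\,(a^+)^k a^k\qquad(n\ge 0),$$ and let $U_\lambda=e^{\lambda\Omega}=\sum_{n\ge0}\frac{\lambda^n}{n!}\Omega^n$. Then for formal power series $g(x),\phi(x)$, the following are equivalent: (i) $\displaystyle\sum_{n,k\ge 0}S_\Omega(n,k)\frac{x^n}{n!}y^k=g(x)e^{y\phi(x)}$; (ii) for all $f$, $\;U_\lambda[f](x)=g(\lambda x^e)\,f\big(x(1+\phi(\lambda x^e))\big)$.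
   Context: $\mathcal{N}(\cdot)$ denotes the normally ordered form of an operator, i.e. its expression as a linear combination of terms with all powers of $a^+$ (and $(a^+)^{-1}$) to the left of all powers of $a$, obtained using $aa^+=a^+a+1$. Both sides of (ii) are understood as formal power series in $\lambda$, with $f\big(x(1+\phi(\lambda x^e))\big)$ understood via its Taylor expansion $\sum_k \frac{f^{(k)}(x)}{k!}\big(x\phi(\lambda x^e)\big)^k$. *)

theory Defs
  imports "HOL-Computational_Algebra.Formal_Laurent_Series"
begin

(* Letters: Cr = a^+ (multiplication by x), CrInv = (a^+)^{-1}, An = a = d/dx *)
datatype letter = Cr | CrInv | An

definition weight :: "letter list \<Rightarrow> int" where
  "weight w = int (length (filter (\<lambda>l. l = Cr) w))
              - int (length (filter (\<lambda>l. l = CrInv) w))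
              - int (length (filter (\<lambda>l. l = An) w))"

definition num_An :: "letter list \<Rightarrow> nat" where
  "num_An w = length (filter (\<lambda>l. l = An) w)"

(* An element of W_{1,oo} given as a finite linear combination of words:
   a list of (coefficient, word) pairs standing for  \<Sum> \<alpha>_w w. *)
type_synonym 'a lincomb = "('a \<times> letter list) list"

(* ---------- Normal ordering ----------
   A normally ordered expression is a finite sum of terms c (a^+)^m a^k  (m :: int, k :: nat),
   represented as a list of ((m,k), c). *)
type_synonym 'a nf = "((int \<times> nat) \<times> 'a) list"

definition ffact_int :: "int \<Rightarrow> nat \<Rightarrow> 'a::comm_ring_1" where
  "ffact_int p j = (\<Prod>i<j. of_int (p - int i))"

(* (a^+)^m a^k (a^+)^p a^l = \<Sum>_j  C(k,j) p^{(j)} (a^+)^{m+p-j} a^{k+l-j},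
   the rule obtained by repeated use of a a^+ = a^+ a + 1 (and its consequence for (a^+)^{-1}) *)
definition nf_mult :: "'a::comm_ring_1 nf \<Rightarrow> 'a nf \<Rightarrow> 'a nf" where
  "nf_mult L M = concat (map (\<lambda>((m,k),c). concat (map (\<lambda>((p,l),d).
      map (\<lambda>j. ((m + p - int j, k + l - j), c * d * of_nat (k choose j) * ffact_int p j)) [0..<Suc k])
     M)) L)"

definition nf_one :: "'a::comm_ring_1 nf" where
  "nf_one = [((0,0),1)]"

fun letter_nf :: "letter \<Rightarrow> 'a::comm_ring_1 nf" where
  "letter_nf Cr = [((1,0),1)]"
| "letter_nf CrInv = [((-1,0),1)]"
| "letter_nf An = [((0,1),1)]"

definition word_nf :: "letter list \<Rightarrow> 'a::comm_ring_1 nf" where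
  "word_nf w = foldr nf_mult (map letter_nf w) nf_one"

definition lincomb_nf :: "'a::comm_ring_1 lincomb \<Rightarrow> 'a nf" where
  "lincomb_nf \<Omega> = concat (map (\<lambda>(\<alpha>,w). map (\<lambda>(mk,c). (mk, \<alpha> * c)) (word_nf w)) \<Omega>)"

definition nf_pow :: "'a::comm_ring_1 nf \<Rightarrow> nat \<Rightarrow> 'a nf" where
  "nf_pow L n = (nf_mult L ^^ n) nf_one"

definition nf_coeff :: "'a::comm_ring_1 nf \<Rightarrow> int \<Rightarrow> nat \<Rightarrow> 'a" where
  "nf_coeff L m k = sum_list (map snd (filter (\<lambda>(mk,c). mk = (m,k)) L))"

(* S_\<Omega>(n,k): N(\<Omega>^n) = (a^+)^{ne} \<Sum>_k S_\<Omega>(n,k) (a^+)^k a^k *)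
definition S_coeff :: "'a::comm_ring_1 lincomb \<Rightarrow> nat \<Rightarrow> nat \<Rightarrow> nat \<Rightarrow> 'a" where
  "S_coeff \<Omega> e n k = nf_coeff (nf_pow (lincomb_nf \<Omega>) n) (int (n * e + k)) k"

(* ---------- Generating functions (i) ----------
   Bivariate series in x (inner) and y (outer): an element of 'a fps fps whose
   y^k-coefficient is a power series in x. *)
definition S_egf :: "'a::field_char_0 lincomb \<Rightarrow> nat \<Rightarrow> 'a fps fps" where
  "S_egf \<Omega> e = Abs_fps (\<lambda>k. Abs_fps (\<lambda>n. S_coeff \<Omega> e n k / fact n))"

definition exp_y :: "'a::field_char_0 fps \<Rightarrow> 'a fps fps" where
  "exp_y \<phi> = Abs_fps (\<lambda>k. fps_const (inverse (fact k)) * \<phi> ^ k)"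

fun letter_op :: "letter \<Rightarrow> 'a::field_char_0 fls \<Rightarrow> 'a fls" where
  "letter_op Cr f = fls_X * f"
| "letter_op CrInv f = fls_X_inv * f"
| "letter_op An f = fls_deriv f"

definition word_op :: "letter list \<Rightarrow> 'a::field_char_0 fls \<Rightarrow> 'a fls" where
  "word_op w = foldr (\<lambda>l F. letter_op l \<circ> F) w id"

definition lincomb_op :: "'a::field_char_0 lincomb \<Rightarrow> 'a fls \<Rightarrow> 'a fls" where
  "lincomb_op \<Omega> f = sum_list (map (\<lambda>(\<alpha>,w). fls_const \<alpha> * word_op w f) \<Omega>)"

definition U_op :: "'a::field_char_0 lincomb \<Rightarrow> 'a fls \<Rightarrow> 'a fls fps" where
  "U_op \<Omega> f = Abs_fps (\<lambda>n. fls_const (inverse (fact n)) * (lincomb_op \<Omega> ^^ n) f)"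

(* h(\<lambda> x^e) as a power series in \<lambda> *)
definition subst_lam :: "'a::field_char_0 fps \<Rightarrow> nat \<Rightarrow> 'a fls fps" where
  "subst_lam h e = Abs_fps (\<lambda>m. fls_const (h $ m) * fls_X ^ (m * e))"

(* f(x(1+\<phi>(\<lambda> x^e))) := \<Sum>_k f^{(k)}(x)/k! (x \<phi>(\<lambda> x^e))^k, as a power series in \<lambda>.
   When \<phi>(0) = 0 the k-th summand is O(\<lambda>^k), so the \<lambda>^n-coefficient is the finite sum over k \<le> n. *)
definition taylor_comp :: "'a::field_char_0 fls \<Rightarrow> 'a fps \<Rightarrow> nat \<Rightarrow> 'a fls fps" where
  "taylor_comp f \<phi> e = Abs_fps (\<lambda>n. \<Sum>k\<le>n.
      fls_const (inverse (fact k)) * (fls_deriv ^^ k) f * (fps_const fls_X * subst_lam \<phi> e) ^ k $ n)"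

end

theory Submission
  imports Defs
begin

(* Normal ordering preserves weight, so N(\<Omega>^n) only contains terms (a^+)^(ne+k) a^k: as an operator
   on Laurent series, \<Omega>^n/n! is x^(ne) \<Sum>_k (S_\<Omega>(n,k)/n!) x^k D^k. Because \<phi>(0) = 0, the
   \<lambda>^n-coefficient of the right-hand side of (ii) is an operator of the same shape,
   x^(ne) \<Sum>_k ([x^n] g \<phi>^k / k!) x^k D^k. An operator x^w \<Sum>_k a_k x^k D^k determines its
   coefficients: on f = x^j it yields (\<Sum>_k a_k j(j-1)...(j-k+1)) x^(w+j), a triangular system in the a_k.
   Hence (ii) holds iff these coefficients agree for all n and k, which is (i) read coefficientwise. *)

unbundle fps_syntax

lemma fls_const_sum: "fls_const (\<Sum>i\<in>A. f i) = (\<Sum>i\<in>A. fls_const (f i) :: 'a::comm_ring_1 fls)"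
  by (induction A rule: infinite_finite_induct) (simp_all flip: fls_plus_const)

lemma fls_X_intpow_const_nth: "(fls_const c * fls_X_intpow m) $$ m = (c :: 'a::comm_ring_1)"
  by (simp flip: fls_shifted_times_simps(1))

lemma fls_higher_deriv_add [simp]:
  "(fls_deriv ^^ k) (f + g) = (fls_deriv ^^ k) f + (fls_deriv ^^ k) (g :: 'a::comm_ring_1 fls)"
  by (induction k) auto

lemma fls_higher_deriv_zero [simp]: "(fls_deriv ^^ k) (0 :: 'a::comm_ring_1 fls) = 0"
  by (induction k) auto

lemma fls_higher_deriv_const_mult [simp]:
  "(fls_deriv ^^ k) (fls_const c * f) = fls_const c * (fls_deriv ^^ k) (f :: 'a::comm_ring_1 fls)"
  by (induction k) auto

lemma fls_higher_deriv_mult: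
  fixes f g :: "'a::comm_ring_1 fls"
  shows "(fls_deriv ^^ n) (f * g) =
    (\<Sum>i\<le>n. of_nat (n choose i) * (fls_deriv ^^ i) f * (fls_deriv ^^ (n - i)) g)"
proof (induction n)
  case 0
  show ?case by simp
next
  case (Suc n)
  let ?D = "\<lambda>i h. (fls_deriv ^^ i) h"
  have "?D (Suc n) (f * g) =
      (\<Sum>i\<le>n. of_nat (n choose i) * ?D (Suc i) f * ?D (n - i) g)
    + (\<Sum>i\<le>n. of_nat (n choose i) * ?D i f * ?D (Suc n - i) g)"
    by (simp add: Suc fls_deriv_sum Suc_diff_le sum.distrib algebra_simps)
  also have "(\<Sum>i\<le>n. of_nat (n choose i) * ?D i f * ?D (Suc n - i) g) =
      (\<Sum>i\<le>Suc n. of_nat (n choose i) * ?D i f * ?D (Suc n - i) g)"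
    by (simp add: binomial_eq_0)
  also have "\<dots> = f * ?D (Suc n) g + (\<Sum>i\<le>n. of_nat (n choose Suc i) * ?D (Suc i) f * ?D (n - i) g)"
    by (simp only: sum.atMost_Suc_shift) simp
  also have "(\<Sum>i\<le>n. of_nat (n choose i) * ?D (Suc i) f * ?D (n - i) g) + \<dots> =
      (\<Sum>i\<le>Suc n. of_nat (Suc n choose i) * ?D i f * ?D (Suc n - i) g)"
    by (simp only: sum.atMost_Suc_shift) (simp add: sum.distrib algebra_simps)
  finally show ?case .
qed

lemma ffact_int_Suc: "ffact_int p (Suc j) = ffact_int p j * (of_int (p - int j) :: 'a::comm_ring_1)"
  by (simp add: ffact_int_def)

lemma ffact_int_of_nat_less: "j < k \<Longrightarrow> ffact_int (int j) k = (0 :: 'a::comm_ring_1)"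
  unfolding ffact_int_def by (rule prod_zero) auto

lemma ffact_int_of_nat_self_nonzero: "ffact_int (int j) j \<noteq> (0 :: 'a::{idom,ring_char_0})"
  by (simp add: ffact_int_def)

lemma fls_higher_deriv_X_intpow:
  "(fls_deriv ^^ j) (fls_X_intpow q :: 'a::comm_ring_1 fls) =
    fls_const (ffact_int q j) * fls_X_intpow (q - int j)"
proof (induction j)
  case 0
  show ?case by (simp add: ffact_int_def)
next
  case (Suc j)
  have "(fls_deriv ^^ Suc j) (fls_X_intpow q :: 'a fls) =
      fls_const (ffact_int q j) * (of_int (q - int j) * fls_X_intpow (q - int j - 1))"
    by (simp only: funpow.simps o_apply Suc fls_deriv_mult_const_left fls_deriv_X_intpow)
  also have "\<dots> = fls_const (ffact_int q (Suc j)) * fls_X_intpow (q - int (Suc j))"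
    by (simp add: ffact_int_Suc fls_of_int mult.assoc diff_diff_eq add.commute flip: fls_const_mult_const)
  finally show ?case .
qed

lemma fls_X_intpow_higher_deriv_normal_order:
  fixes f :: "'a::comm_ring_1 fls"
  shows "fls_X_intpow m * (fls_deriv ^^ k) (fls_X_intpow p * (fls_deriv ^^ l) f) =
    (\<Sum>j\<le>k. fls_const (of_nat (k choose j) * ffact_int p j) *
      fls_X_intpow (m + p - int j) * (fls_deriv ^^ (k + l - j)) f)"
  unfolding fls_higher_deriv_mult sum_distrib_left
proof (rule sum.cong[OF refl])
  fix j assume "j \<in> {..k}"
  then have deriv: "(fls_deriv ^^ (k - j)) ((fls_deriv ^^ l) f) = (fls_deriv ^^ (k + l - j)) f"
    by (simp flip: funpow_add[unfolded comp_def, THEN fun_cong])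
  have X: "fls_X_intpow (m + p - int j) = fls_X_intpow m * (fls_X_intpow (p - int j) :: 'a fls)"
    by (simp only: fls_X_intpow_times_fls_X_intpow add_diff_eq)
  show "fls_X_intpow m * (of_nat (k choose j) * (fls_deriv ^^ j) (fls_X_intpow p) *
      (fls_deriv ^^ (k - j)) ((fls_deriv ^^ l) f)) =
    fls_const (of_nat (k choose j) * ffact_int p j) * fls_X_intpow (m + p - int j) *
      (fls_deriv ^^ (k + l - j)) f"
    by (simp only: deriv X fls_higher_deriv_X_intpow fls_of_nat mult_ac flip: fls_const_mult_const)
qed

definition nf_op :: "'a::comm_ring_1 nf \<Rightarrow> 'a fls \<Rightarrow> 'a fls" where
  "nf_op L f = sum_list (map (\<lambda>((m, k), c). fls_const c * fls_X_intpow m * (fls_deriv ^^ k) f) L)"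

lemma nf_op_Nil [simp]: "nf_op [] f = 0"
  by (simp add: nf_op_def)

lemma nf_op_Cons [simp]:
  "nf_op (((m, k), c) # L) f = fls_const c * fls_X_intpow m * (fls_deriv ^^ k) f + nf_op L f"
  by (simp add: nf_op_def)

lemma nf_op_append [simp]: "nf_op (L @ M) f = nf_op L f + nf_op M f"
  by (simp add: nf_op_def)

lemma nf_op_nf_mult_single:
  "nf_op (nf_mult [((m, k), c)] [((p, l), d)]) f =
    fls_const c * fls_X_intpow m * (fls_deriv ^^ k) (fls_const d * fls_X_intpow p * (fls_deriv ^^ l) f)"
proof -
  have "nf_op (nf_mult [((m, k), c)] [((p, l), d)]) f =
      (\<Sum>j\<le>k. fls_const (c * d * of_nat (k choose j) * ffact_int p j) *
        fls_X_intpow (m + p - int j) * (fls_deriv ^^ (k + l - j)) f)"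
    by (simp only: nf_mult_def nf_op_def list.map concat.simps append_Nil2 prod.case map_map o_def
        interv_sum_list_conv_sum_set_nat set_upt atLeast0LessThan lessThan_Suc_atMost)
  also have "\<dots> = fls_const (c * d) * (\<Sum>j\<le>k. fls_const (of_nat (k choose j) * ffact_int p j) *
        fls_X_intpow (m + p - int j) * (fls_deriv ^^ (k + l - j)) f)"
    by (simp add: sum_distrib_left mult_ac flip: fls_const_mult_const)
  also have "\<dots> = fls_const (c * d) * (fls_X_intpow m * (fls_deriv ^^ k) (fls_X_intpow p * (fls_deriv ^^ l) f))"
    by (simp only: fls_X_intpow_higher_deriv_normal_order)
  finally show ?thesis
    by (simp add: mult_ac flip: fls_const_mult_const)
qed

lemma nf_op_nf_mult: "nf_op (nf_mult L M) f = nf_op L (nf_op M f)"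
proof (induction L)
  case Nil
  show ?case by (simp add: nf_mult_def)
next
  case (Cons t L)
  obtain m k c where t: "t = ((m, k), c)" by (metis prod.collapse)
  have "nf_op (nf_mult [((m, k), c)] M) f = fls_const c * fls_X_intpow m * (fls_deriv ^^ k) (nf_op M f)"
  proof (induction M)
    case Nil
    show ?case by (simp add: nf_mult_def)
  next
    case (Cons s M)
    obtain p l d where s: "s = ((p, l), d)" by (metis prod.collapse)
    have "nf_mult [((m, k), c)] (s # M) = nf_mult [((m, k), c)] [s] @ nf_mult [((m, k), c)] M"
      by (simp add: nf_mult_def)
    then show ?case
      using Cons.IH by (simp add: s nf_op_nf_mult_single distrib_left)
  qed
  moreover have "nf_mult (t # L) M = nf_mult [((m, k), c)] M @ nf_mult L M"
    by (simp add: t nf_mult_def)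
  ultimately show ?case
    using Cons.IH by (simp add: t)
qed

lemma nf_op_nf_pow: "nf_op (nf_pow L n) = nf_op L ^^ n"
proof (induction n)
  case 0
  show ?case by (simp add: nf_pow_def nf_one_def fun_eq_iff)
next
  case (Suc n)
  then show ?case by (simp add: nf_pow_def nf_op_nf_mult fun_eq_iff)
qed

lemma nf_op_letter_nf: "nf_op (letter_nf l) = (letter_op l :: 'a::field_char_0 fls \<Rightarrow> 'a fls)"
  by (cases l) (simp_all add: fun_eq_iff fls_X_conv_shift_1 fls_X_inv_conv_shift_1)

lemma nf_op_word_nf: "nf_op (word_nf w) = (word_op w :: 'a::field_char_0 fls \<Rightarrow> 'a fls)"
  by (induction w) (simp_all add: word_nf_def word_op_def nf_one_def nf_op_nf_mult nf_op_letter_nf fun_eq_iff)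

lemma nf_op_lincomb_nf: "nf_op (lincomb_nf \<Omega>) = (lincomb_op \<Omega> :: 'a::field_char_0 fls \<Rightarrow> 'a fls)"
proof
  fix f :: "'a fls"
  have scale: "nf_op (map (\<lambda>(mk, c). (mk, \<alpha> * c)) L) f = fls_const \<alpha> * nf_op L f" for \<alpha> L
    by (induction L) (auto simp: algebra_simps)
  show "nf_op (lincomb_nf \<Omega>) f = lincomb_op \<Omega> f"
    by (induction \<Omega>) (auto simp: lincomb_nf_def lincomb_op_def scale nf_op_word_nf)
qed

definition nf_homogeneous :: "int \<Rightarrow> 'a nf \<Rightarrow> bool" where
  "nf_homogeneous w L \<longleftrightarrow> (\<forall>((m, k), c) \<in> set L. m = int k + w)"

lemma nf_homogeneousD: "nf_homogeneous w L \<Longrightarrow> ((m, k), c) \<in> set L \<Longrightarrow> m = int k + w"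
  by (auto simp: nf_homogeneous_def)

lemma nf_homogeneous_nf_mult:
  assumes "nf_homogeneous v L" "nf_homogeneous w M"
  shows "nf_homogeneous (v + w) (nf_mult L M :: 'a::comm_ring_1 nf)"
  unfolding nf_homogeneous_def[of "v + w"] nf_mult_def
  by (auto split: prod.splits dest!: nf_homogeneousD[OF assms(1)] nf_homogeneousD[OF assms(2)])

lemma nf_homogeneous_nf_pow:
  "nf_homogeneous w L \<Longrightarrow> nf_homogeneous (int n * w) (nf_pow L n :: 'a::comm_ring_1 nf)"
proof (induction n)
  case 0
  show ?case by (simp add: nf_pow_def nf_one_def nf_homogeneous_def)
next
  case (Suc n)
  then have "nf_homogeneous (w + int n * w) (nf_mult L (nf_pow L n))"
    using nf_homogeneous_nf_mult by blast
  then show ?case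
    by (simp add: nf_pow_def algebra_simps)
qed

lemma weight_Cons: "weight (l # w) = weight [l] + weight w"
  by (cases l) (simp_all add: weight_def)

lemma nf_homogeneous_word_nf: "nf_homogeneous (weight w) (word_nf w :: 'a::comm_ring_1 nf)"
proof (induction w)
  case Nil
  show ?case by (simp add: word_nf_def nf_one_def nf_homogeneous_def weight_def)
next
  case (Cons l w)
  have "nf_homogeneous (weight [l]) (letter_nf l :: 'a nf)"
    by (cases l) (simp_all add: nf_homogeneous_def weight_def)
  from nf_homogeneous_nf_mult[OF this Cons.IH] show ?case
    by (simp add: word_nf_def weight_Cons[of l w])
qed

lemma nf_homogeneous_lincomb_nf:
  assumes "\<forall>(\<alpha>, w) \<in> set \<Omega>. weight w = d"
  shows "nf_homogeneous d (lincomb_nf \<Omega> :: 'a::comm_ring_1 nf)"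
proof -
  have "m = int k + d" if "(\<alpha>, w) \<in> set \<Omega>" "((m, k), c) \<in> set (word_nf w :: 'a nf)" for \<alpha> w m k c
    using that assms nf_homogeneousD[OF nf_homogeneous_word_nf] by fastforce
  then show ?thesis
    unfolding nf_homogeneous_def lincomb_nf_def by auto
qed

definition homogeneous_diff_op :: "int \<Rightarrow> (nat \<Rightarrow> 'a::comm_ring_1) \<Rightarrow> nat \<Rightarrow> 'a fls \<Rightarrow> 'a fls" where
  "homogeneous_diff_op w a N f = (\<Sum>k<N. fls_const (a k) * fls_X_intpow (w + int k) * (fls_deriv ^^ k) f)"

lemma homogeneous_diff_op_extend:
  assumes "\<forall>k\<ge>N. a k = 0" "N \<le> N'"
  shows "homogeneous_diff_op w a N' f = homogeneous_diff_op w a N f"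
  unfolding homogeneous_diff_op_def using assms
  by (intro sum.mono_neutral_right) auto

lemma homogeneous_diff_op_scale:
  "fls_const c * fls_X_intpow v * homogeneous_diff_op w a N f =
    homogeneous_diff_op (v + w) (\<lambda>k. c * a k) N f"
  unfolding homogeneous_diff_op_def sum_distrib_left
  by (intro sum.cong refl)
     (simp add: fls_shifted_times_simps algebra_simps flip: fls_const_mult_const)

lemma homogeneous_diff_op_sum:
  "(\<Sum>i\<in>A. homogeneous_diff_op w (a i) N f) = homogeneous_diff_op w (\<lambda>k. \<Sum>i\<in>A. a i k) N f"
  unfolding homogeneous_diff_op_def fls_const_sum sum_distrib_right
  by (rule sum.swap)

lemma homogeneous_diff_op_add:
  "homogeneous_diff_op w a N f + homogeneous_diff_op w b N f =
    homogeneous_diff_op w (\<lambda>k. a k + b k) N f"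
  unfolding homogeneous_diff_op_def
  by (simp add: sum.distrib algebra_simps flip: fls_plus_const)

lemma homogeneous_diff_op_diff:
  "homogeneous_diff_op w a N f - homogeneous_diff_op w b N f =
    homogeneous_diff_op w (\<lambda>k. a k - b k) N f"
  unfolding homogeneous_diff_op_def
  by (simp add: sum_subtractf algebra_simps flip: fls_minus_const)

lemma homogeneous_diff_op_X_intpow:
  "homogeneous_diff_op w a N (fls_X_intpow j) =
    fls_const (\<Sum>k<N. a k * ffact_int j k) * fls_X_intpow (w + j)"
  unfolding homogeneous_diff_op_def fls_higher_deriv_X_intpow fls_const_sum sum_distrib_right
  by (intro sum.cong refl)
     (simp add: fls_shifted_times_simps algebra_simps)

lemma homogeneous_diff_op_eq_0D:
  fixes a :: "nat \<Rightarrow> 'a::{idom, ring_char_0}"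
  assumes vanish: "\<And>f. homogeneous_diff_op w a N f = 0" and "k < N"
  shows "a k = 0"
  using \<open>k < N\<close>
proof (induction k rule: less_induct)
  case (less k)
  have "fls_const (\<Sum>i<N. a i * ffact_int (int k) i) * fls_X_intpow (w + int k) = (0 :: 'a fls)"
    using vanish[of "fls_X_intpow (int k)"] by (simp only: homogeneous_diff_op_X_intpow)
  then have "(\<Sum>i<N. a i * ffact_int (int k) i) = 0"
    by (metis fls_X_intpow_const_nth fls_zero_nth)
  moreover have "(\<Sum>i<N. a i * ffact_int (int k) i) =
      a k * ffact_int (int k) k + (\<Sum>i\<in>{..<N} - {k}. a i * ffact_int (int k) i)"
    using less.prems by (simp add: sum.remove)
  moreover have "(\<Sum>i\<in>{..<N} - {k}. a i * ffact_int (int k) i) = 0"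
  proof (rule sum.neutral, rule ballI)
    fix i assume "i \<in> {..<N} - {k}"
    then consider "i < k" | "k < i" by fastforce
    then show "a i * ffact_int (int k) i = 0"
      by cases (use less in \<open>simp_all add: ffact_int_of_nat_less\<close>)
  qed
  ultimately show ?case
    by (simp add: ffact_int_of_nat_self_nonzero)
qed

lemma homogeneous_diff_op_eq_iff:
  fixes a b :: "nat \<Rightarrow> 'a::{idom, ring_char_0}"
  assumes "\<forall>k\<ge>N. a k = 0" "\<forall>k\<ge>N. b k = 0"
  shows "(\<forall>f. homogeneous_diff_op w a N f = homogeneous_diff_op w b N f) \<longleftrightarrow> a = b"
proof
  assume "\<forall>f. homogeneous_diff_op w a N f = homogeneous_diff_op w b N f"
  then have "homogeneous_diff_op w (\<lambda>k. a k - b k) N f = 0" for f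
    by (simp flip: homogeneous_diff_op_diff)
  then have "a k = b k" if "k < N" for k
    using homogeneous_diff_op_eq_0D[of w "\<lambda>k. a k - b k" N k] that by simp
  with assms show "a = b"
    by (metis le_less_linear ext)
qed simp

lemma nf_coeff_Nil [simp]: "nf_coeff [] m k = 0"
  by (simp add: nf_coeff_def)

lemma nf_coeff_Cons [simp]:
  "nf_coeff (((m', k'), c) # L) m k = (if (m', k') = (m, k) then c else 0) + nf_coeff L m k"
  by (simp add: nf_coeff_def)

lemma nf_coeff_eq_0: "\<forall>((m', k'), c) \<in> set L. k' < N \<Longrightarrow> N \<le> k \<Longrightarrow> nf_coeff L m k = 0"
  by (induction L) auto

lemma nf_op_homogeneous:
  assumes "nf_homogeneous w L" "\<forall>((m, k), c) \<in> set L. k < N"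
  shows "nf_op L f = homogeneous_diff_op w (\<lambda>k. nf_coeff L (w + int k) k) N f"
  using assms
proof (induction L)
  case Nil
  show ?case by (simp add: homogeneous_diff_op_def)
next
  case (Cons t L)
  obtain m k c where t: "t = ((m, k), c)" by (metis prod.collapse)
  with Cons.prems have m: "m = int k + w" and "k < N"
    by (auto simp: nf_homogeneous_def)
  have IH: "nf_op L f = homogeneous_diff_op w (\<lambda>k. nf_coeff L (w + int k) k) N f"
    using Cons by (simp add: nf_homogeneous_def)
  have "homogeneous_diff_op w (\<lambda>k'. if k' = k then c else 0) N f =
      (\<Sum>k'<N. if k' = k then fls_const c * fls_X_intpow m * (fls_deriv ^^ k) f else 0)"
    unfolding homogeneous_diff_op_def m by (intro sum.cong) (auto simp: add.commute)
  also have "\<dots> = fls_const c * fls_X_intpow m * (fls_deriv ^^ k) f"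
    using \<open>k < N\<close> by simp
  finally have "homogeneous_diff_op w (\<lambda>k'. if k' = k then c else 0) N f =
      fls_const c * fls_X_intpow m * (fls_deriv ^^ k) f" .
  with IH have "nf_op (t # L) f = homogeneous_diff_op w (\<lambda>k'. if k' = k then c else 0) N f +
      homogeneous_diff_op w (\<lambda>k. nf_coeff L (w + int k) k) N f"
    by (simp add: t)
  also have "\<dots> = homogeneous_diff_op w (\<lambda>k. nf_coeff (t # L) (w + int k) k) N f"
    unfolding homogeneous_diff_op_add by (simp add: t m add.commute eq_commute)
  finally show ?case .
qed

lemma U_op_nth_homogeneous:
  fixes \<Omega> :: "'a::field_char_0 lincomb"
  assumes "\<forall>(\<alpha>, w) \<in> set \<Omega>. weight w = int e"
  obtains N where "\<forall>k\<ge>N. S_coeff \<Omega> e n k = 0"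
    and "\<And>f. U_op \<Omega> f $ n = homogeneous_diff_op (int (n * e)) (\<lambda>k. S_coeff \<Omega> e n k / fact n) N f"
proof -
  define P where "P = nf_pow (lincomb_nf \<Omega>) n"
  have hom: "nf_homogeneous (int (n * e)) P"
    using nf_homogeneous_nf_pow[OF nf_homogeneous_lincomb_nf[OF assms]] by (simp add: P_def)
  obtain N where N: "\<forall>((m, k), c) \<in> set P. k < N"
  proof -
    obtain N where "\<forall>k \<in> (\<lambda>((m, k), c). k) ` set P. k < N"
      using finite_nat_set_iff_bounded by blast
    then show ?thesis
      using that by fastforce
  qed
  have S: "S_coeff \<Omega> e n k = nf_coeff P (int (n * e) + int k) k" for k
    by (simp add: S_coeff_def P_def)
  show ?thesis
  proof
    show "\<forall>k\<ge>N. S_coeff \<Omega> e n k = 0"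
      using nf_coeff_eq_0[OF N] S by simp
  next
    fix f
    have "U_op \<Omega> f $ n = fls_const (inverse (fact n)) * fls_X_intpow 0 * nf_op P f"
      by (simp add: U_op_def P_def nf_op_nf_pow nf_op_lincomb_nf)
    also have "\<dots> = homogeneous_diff_op (0 + int (n * e))
        (\<lambda>k. inverse (fact n) * nf_coeff P (int (n * e) + int k) k) N f"
      by (simp only: nf_op_homogeneous[OF hom N] homogeneous_diff_op_scale)
    finally show "U_op \<Omega> f $ n = homogeneous_diff_op (int (n * e)) (\<lambda>k. S_coeff \<Omega> e n k / fact n) N f"
      by (simp add: S divide_inverse mult.commute)
  qed
qed

lemma subst_lam_nth: "subst_lam h e $ m = fls_const (h $ m) * fls_X_intpow (int (m * e))"
  by (simp add: subst_lam_def fls_X_power_conv_shift_1)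

lemma subst_lam_mult: "subst_lam (a * b) e = subst_lam a e * subst_lam (b :: 'a::field_char_0 fps) e"
proof (rule fps_ext)
  fix n
  have "fls_const (a $ i * b $ (n - i)) * fls_X_intpow (int (n * e)) =
      subst_lam a e $ i * subst_lam b e $ (n - i)" if "i \<le> n" for i
  proof -
    from that have "int (i * e) + int ((n - i) * e) = int (n * e)"
      by (metis add_mult_distrib le_add_diff_inverse of_nat_add)
    then have "fls_X_intpow (int (i * e)) * fls_X_intpow (int ((n - i) * e)) =
        (fls_X_intpow (int (n * e)) :: 'a fls)"
      by (simp only: fls_X_intpow_times_fls_X_intpow)
    moreover have "subst_lam a e $ i * subst_lam b e $ (n - i) = fls_const (a $ i * b $ (n - i)) *
        (fls_X_intpow (int (i * e)) * fls_X_intpow (int ((n - i) * e)))"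
      by (simp only: subst_lam_nth mult_ac flip: fls_const_mult_const)
    ultimately show ?thesis
      by simp
  qed
  then show "subst_lam (a * b) e $ n = (subst_lam a e * subst_lam b e) $ n"
    by (simp add: subst_lam_nth fps_mult_nth fls_const_sum sum_distrib_right)
qed

lemma subst_lam_power: "subst_lam (h ^ k) e = subst_lam (h :: 'a::field_char_0 fps) e ^ k"
proof (induction k)
  case 0
  show ?case by (rule fps_ext) (simp add: subst_lam_def)
next
  case (Suc k)
  then show ?case by (simp add: subst_lam_mult)
qed

lemma taylor_comp_nth:
  "taylor_comp f \<phi> e $ j = homogeneous_diff_op (int (j * e)) (\<lambda>k. (\<phi> ^ k) $ j / fact k) (Suc j) f"
proof -
  have "(fps_const fls_X * subst_lam \<phi> e) ^ k $ j =
      fls_const ((\<phi> ^ k) $ j) * fls_X_intpow (int (j * e) + int k)" for k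
    by (simp add: power_mult_distrib subst_lam_nth fls_X_power_conv_shift_1
        fls_shifted_times_simps algebra_simps flip: subst_lam_power)
  then show ?thesis
    unfolding taylor_comp_def fps_nth_Abs_fps homogeneous_diff_op_def lessThan_Suc_atMost
    by (intro sum.cong refl) (simp add: divide_inverse mult_ac flip: fls_const_mult_const)
qed

lemma subst_lam_mult_taylor_comp_nth:
  assumes "\<phi> $ 0 = 0"
  shows "(subst_lam g e * taylor_comp f \<phi> e) $ n =
    homogeneous_diff_op (int (n * e)) (\<lambda>k. (g * \<phi> ^ k) $ n / fact k) (Suc n) f"
proof -
  have "(subst_lam g e * taylor_comp f \<phi> e) $ n = (\<Sum>i = 0..n.
      homogeneous_diff_op (int (n * e)) (\<lambda>k. g $ i * (\<phi> ^ k) $ (n - i) / fact k) (Suc n) f)"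
    unfolding fps_mult_nth
  proof (rule sum.cong[OF refl])
    fix i assume "i \<in> {0..n}"
    then have e: "int (i * e) + int ((n - i) * e) = int (n * e)"
      by (metis add_mult_distrib atLeastAtMost_iff le_add_diff_inverse of_nat_add)
    have "\<forall>k\<ge>Suc (n - i). (\<phi> ^ k) $ (n - i) / fact k = 0"
      using startsby_zero_power_prefix[OF assms] by simp
    from homogeneous_diff_op_extend[OF this, of "Suc n"]
    have "taylor_comp f \<phi> e $ (n - i) =
        homogeneous_diff_op (int ((n - i) * e)) (\<lambda>k. (\<phi> ^ k) $ (n - i) / fact k) (Suc n) f"
      by (simp add: taylor_comp_nth)
    then have "subst_lam g e $ i * taylor_comp f \<phi> e $ (n - i) =
        fls_const (g $ i) * fls_X_intpow (int (i * e)) *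
        homogeneous_diff_op (int ((n - i) * e)) (\<lambda>k. (\<phi> ^ k) $ (n - i) / fact k) (Suc n) f"
      by (simp only: subst_lam_nth)
    also have "\<dots> = homogeneous_diff_op (int (i * e) + int ((n - i) * e))
        (\<lambda>k. g $ i * ((\<phi> ^ k) $ (n - i) / fact k)) (Suc n) f"
      by (rule homogeneous_diff_op_scale)
    finally show "subst_lam g e $ i * taylor_comp f \<phi> e $ (n - i) =
        homogeneous_diff_op (int (n * e)) (\<lambda>k. g $ i * (\<phi> ^ k) $ (n - i) / fact k) (Suc n) f"
      by (simp only: e times_divide_eq_right)
  qed
  also have "\<dots> = homogeneous_diff_op (int (n * e)) (\<lambda>k. (g * \<phi> ^ k) $ n / fact k) (Suc n) f"
    by (simp add: homogeneous_diff_op_sum fps_mult_nth sum_divide_distrib)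
  finally show ?thesis .
qed

lemma fps_mult_power_nth_eq_0: "\<phi> $ 0 = 0 \<Longrightarrow> n < k \<Longrightarrow> (g * \<phi> ^ k) $ n = (0 :: 'a::comm_ring_1)"
  unfolding fps_mult_nth
  by (rule sum.neutral) (use startsby_zero_power_prefix[of \<phi> k] in auto)

lemma U_op_nth_eq_iff:
  fixes \<Omega> :: "'a::field_char_0 lincomb"
  assumes "\<forall>(\<alpha>, w) \<in> set \<Omega>. weight w = int e" and "\<phi> $ 0 = 0"
  shows "(\<forall>f. U_op \<Omega> f $ n = (subst_lam g e * taylor_comp f \<phi> e) $ n) \<longleftrightarrow>
    (\<lambda>k. S_coeff \<Omega> e n k / fact n) = (\<lambda>k. (g * \<phi> ^ k) $ n / fact k)"
proof -
  obtain N where S: "\<forall>k\<ge>N. S_coeff \<Omega> e n k = 0"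
    and U: "\<And>f. U_op \<Omega> f $ n = homogeneous_diff_op (int (n * e)) (\<lambda>k. S_coeff \<Omega> e n k / fact n) N f"
    using U_op_nth_homogeneous[OF assms(1), where n = n] by blast
  define M where "M = max N (Suc n)"
  have S': "\<forall>k\<ge>M. S_coeff \<Omega> e n k / fact n = 0"
    and R': "\<forall>k\<ge>M. (g * \<phi> ^ k) $ n / fact k = 0"
    using S fps_mult_power_nth_eq_0[OF assms(2)] by (simp_all add: M_def)
  have "U_op \<Omega> f $ n = homogeneous_diff_op (int (n * e)) (\<lambda>k. S_coeff \<Omega> e n k / fact n) M f" for f
  proof -
    have "\<forall>k\<ge>N. S_coeff \<Omega> e n k / fact n = 0"
      using S by simp
    then show ?thesis
      unfolding U by (rule homogeneous_diff_op_extend[symmetric]) (simp add: M_def)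
  qed
  moreover have "(subst_lam g e * taylor_comp f \<phi> e) $ n =
      homogeneous_diff_op (int (n * e)) (\<lambda>k. (g * \<phi> ^ k) $ n / fact k) M f" for f
  proof -
    have "\<forall>k\<ge>Suc n. (g * \<phi> ^ k) $ n / fact k = 0"
      using fps_mult_power_nth_eq_0[OF assms(2)] by simp
    then show ?thesis
      unfolding subst_lam_mult_taylor_comp_nth[OF assms(2)]
      by (rule homogeneous_diff_op_extend[symmetric]) (simp add: M_def)
  qed
  ultimately show ?thesis
    using homogeneous_diff_op_eq_iff[OF S' R'] by simp
qed

lemma S_egf_nth_nth: "S_egf \<Omega> e $ k $ n = S_coeff \<Omega> e n k / fact n"
  by (simp add: S_egf_def)

lemma fps_const_mult_exp_y_nth_nth:
  "(fps_const g * exp_y \<phi>) $ k $ n = (g * \<phi> ^ k) $ n / (fact k :: 'a::field_char_0)"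
proof -
  have "(fps_const g * exp_y \<phi>) $ k = fps_const (inverse (fact k)) * (g * \<phi> ^ k)"
    unfolding exp_y_def fps_mult_left_const_nth fps_nth_Abs_fps by (simp only: mult.left_commute)
  then have "(fps_const g * exp_y \<phi>) $ k $ n = inverse (fact k) * (g * \<phi> ^ k) $ n"
    by (simp only: fps_mult_left_const_nth)
  then show ?thesis
    by (simp add: divide_inverse mult.commute)
qed

theorem mainTheorem2:
  fixes \<Omega> :: "'a::field_char_0 lincomb" and e :: nat and g \<phi> :: "'a fps"
  assumes words: "\<forall>(\<alpha>, w) \<in> set \<Omega>. num_An w = 1 \<and> weight w = int e"
    and phi0: "\<phi> $ 0 = 0"
  shows "S_egf \<Omega> e = fps_const g * exp_y \<phi>
     \<longleftrightarrow> (\<forall>f. U_op \<Omega> f = subst_lam g e * taylor_comp f \<phi> e)"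
proof -
  have weights: "\<forall>(\<alpha>, w) \<in> set \<Omega>. weight w = int e"
    using words by auto
  have "S_egf \<Omega> e = fps_const g * exp_y \<phi> \<longleftrightarrow>
      (\<forall>n. (\<lambda>k. S_coeff \<Omega> e n k / fact n) = (\<lambda>k. (g * \<phi> ^ k) $ n / fact k))"
    unfolding fps_eq_iff fun_eq_iff S_egf_nth_nth fps_const_mult_exp_y_nth_nth by blast
  also have "\<dots> \<longleftrightarrow> (\<forall>n f. U_op \<Omega> f $ n = (subst_lam g e * taylor_comp f \<phi> e) $ n)"
    using U_op_nth_eq_iff[OF weights phi0] by blast
  also have "\<dots> \<longleftrightarrow> (\<forall>f. U_op \<Omega> f = subst_lam g e * taylor_comp f \<phi> e)"
    by (auto simp: fps_eq_iff)
  finally show ?thesis .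
qed

end
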